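(* Let $b(r)$ be a smooth positive function on an open interval of $r>0$ and consider the metric $ds^2=-b^2dt^2+b^{-2}dr^2+r^2(d\theta^2+\sin^2\theta\,d\phi^2)$. Let $\kappa_1,\kappa_2$ be constants, set $\Lambda=-\kappa_1$, $\lambda=-\kappa_2$, and let $$K_{kl}=\kappa_2r^2\,u_ku_l+(\kappa_1+2\kappa_2r^2)g_{kl}-\kappa_2r^2\,\chi_k\chi_l .$$ Then the vacuum conformal Killing gravity equations $R_{kl}-\tfrac12Rg_{kl}=K_{kl}$ hold if and only if there is a constant $M$ such that $$b^2(r)=1-\frac{2M}{r}-\frac{\Lambda}{3}r^2-\frac{\lambda}{5}r^4 .$$
   Context: $u_k$ is the unit timelike covector with components $u_0=-b$ and all others zero; $\chi_k$ is the unit radial covector with $\chi_r=1/b$ and all others zero. $R_{kl}$ is the Ricci tensor and $R$ the scalar curvature. The tensor $K_{kl}$ is the divergence-free conformal Killing tensor $\mathsf A u_ku_l+\mathsf Bg_{kl}+\mathsf C\chi_k\chi_l$ with $\mathsf A=\kappa_2 f_2^2-2\kappa_3 b^2$, $\mathsf B=\kappa_1+2\kappa_2 f_2^2+\kappa_3 b^2$, $\mathsf C=-\kappa_2 f_2^2$, specialized to $f_2=r$ and $\kappa_3=0$ (the case $h=bf_1=1$). *)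

theory Defs
  imports "HOL-Analysis.Analysis"
begin

text \<open>Coordinates: points of spacetime are functions x :: nat => real, of which only
  x 0 = t, x 1 = r, x 2 = theta, x 3 = phi matter. Indices range over 0..3.\<close>

type_synonym point = "nat \<Rightarrow> real"
type_synonym metric = "point \<Rightarrow> nat \<Rightarrow> nat \<Rightarrow> real"

definition smooth_on :: "real set \<Rightarrow> (real \<Rightarrow> real) \<Rightarrow> bool" where
  "smooth_on I f \<longleftrightarrow> (\<forall>n. \<forall>r\<in>I. ((deriv ^^ n) f) differentiable (at r))"

definition pd :: "(point \<Rightarrow> real) \<Rightarrow> nat \<Rightarrow> point \<Rightarrow> real" where
  "pd f i x = deriv (\<lambda>s. f (x(i := s))) (x i)"

definition ginv :: "metric \<Rightarrow> point \<Rightarrow> nat \<Rightarrow> nat \<Rightarrow> real" where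
  "ginv g x = (THE h. (\<forall>j k. (j \<ge> 4 \<or> k \<ge> 4) \<longrightarrow> h j k = 0) \<and>
      (\<forall>i<4. \<forall>k<4. (\<Sum>j<4. g x i j * h j k) = (if i = k then 1 else 0)))"

definition christoffel :: "metric \<Rightarrow> point \<Rightarrow> nat \<Rightarrow> nat \<Rightarrow> nat \<Rightarrow> real" where
  "christoffel g x k i j = (1/2) * (\<Sum>l<4. ginv g x k l *
      (pd (\<lambda>y. g y j l) i x + pd (\<lambda>y. g y i l) j x - pd (\<lambda>y. g y i j) l x))"

definition ricci :: "metric \<Rightarrow> point \<Rightarrow> nat \<Rightarrow> nat \<Rightarrow> real" where
  "ricci g x i j = (\<Sum>k<4. pd (\<lambda>y. christoffel g y k i j) k x
      - pd (\<lambda>y. christoffel g y k i k) j x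
      + (\<Sum>l<4. christoffel g x k k l * christoffel g x l i j
               - christoffel g x k j l * christoffel g x l i k))"

definition scalar_curv :: "metric \<Rightarrow> point \<Rightarrow> real" where
  "scalar_curv g x = (\<Sum>i<4. \<Sum>j<4. ginv g x i j * ricci g x i j)"

definition sss_metric :: "(real \<Rightarrow> real) \<Rightarrow> metric" where
  "sss_metric b x i j = (if i = j then
      (if i = 0 then - (b (x 1))\<^sup>2
       else if i = 1 then 1 / (b (x 1))\<^sup>2
       else if i = 2 then (x 1)\<^sup>2
       else if i = 3 then (x 1)\<^sup>2 * (sin (x 2))\<^sup>2
       else 0)
    else 0)"

definition u_cov :: "(real \<Rightarrow> real) \<Rightarrow> point \<Rightarrow> nat \<Rightarrow> real" where
  "u_cov b x k = (if k = 0 then - b (x 1) else 0)"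

definition chi_cov :: "(real \<Rightarrow> real) \<Rightarrow> point \<Rightarrow> nat \<Rightarrow> real" where
  "chi_cov b x k = (if k = 1 then 1 / b (x 1) else 0)"

definition K_tensor :: "real \<Rightarrow> real \<Rightarrow> (real \<Rightarrow> real) \<Rightarrow> point \<Rightarrow> nat \<Rightarrow> nat \<Rightarrow> real" where
  "K_tensor \<kappa>1 \<kappa>2 b x k l =
     \<kappa>2 * (x 1)\<^sup>2 * u_cov b x k * u_cov b x l
     + (\<kappa>1 + 2 * \<kappa>2 * (x 1)\<^sup>2) * sss_metric b x k l
     - \<kappa>2 * (x 1)\<^sup>2 * chi_cov b x k * chi_cov b x l"

end

theory Submission
  imports Defs
begin

(* For the static metric with lapse f = b^2 everything is explicit in f, f', f''.  The Einstein
   tensor and K are both the metric times a diagonal matrix, with eigenvalues (r f' + f - 1)/r^2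
   and kappa1 + kappa2 r^2 on the (t,r) block, (r f'' + 2 f')/(2r) and kappa1 + 2 kappa2 r^2 on
   the angular block.  The (t,r) equation says that r f - r - kappa1 r^3/3 - kappa2 r^5/5 has
   derivative zero, i.e. is a constant -2M.  The angular equation is the derivative of r^2 times
   the (t,r) one (contracted Bianchi identity), so it adds nothing. *)

lemma nat_less_4_iff: "(i::nat) < 4 \<longleftrightarrow> i = 0 \<or> i = 1 \<or> i = 2 \<or> i = 3"
  by auto

lemma sum_lessThan_4: "(\<Sum>i<(4::nat). a i) = a 0 + a 1 + a 2 + (a 3 :: real)"
  by (simp add: eval_nat_numeral)

definition diagonal_at :: "metric \<Rightarrow> point \<Rightarrow> bool" where
  "diagonal_at g x \<longleftrightarrow> (\<forall>i<4. \<forall>j<4. i \<noteq> j \<longrightarrow> g x i j = 0) \<and> (\<forall>i<4. g x i i \<noteq> 0)"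

lemma ginv_diagonal:
  assumes "diagonal_at g x"
  shows "ginv g x = (\<lambda>i j. if i = j \<and> i < 4 then 1 / g x i i else 0)"
  unfolding ginv_def
proof (rule the_equality)
  have diag: "\<forall>i<4. \<forall>j<4. i \<noteq> j \<longrightarrow> g x i j = 0" and nz: "\<forall>i<4. g x i i \<noteq> 0"
    using assms unfolding diagonal_at_def by blast+
  have row: "(\<Sum>j<4. g x i j * h j k) = g x i i * h i k" if "i < 4" for i k and h :: "nat \<Rightarrow> nat \<Rightarrow> real"
  proof -
    have "(\<Sum>j<4. g x i j * h j k) = (\<Sum>j<4. if i = j then g x i i * h i k else 0)"
      using diag that by (intro sum.cong) auto
    then show ?thesis using that by simp
  qed
  show "(\<forall>j k. 4 \<le> j \<or> 4 \<le> k \<longrightarrow> (if j = k \<and> j < 4 then 1 / g x j j else 0) = 0) \<and>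
    (\<forall>i<4. \<forall>k<4. (\<Sum>j<4. g x i j * (if j = k \<and> j < 4 then 1 / g x j j else 0)) = (if i = k then 1 else 0))"
    using nz row[of _ "\<lambda>j k. if j = k \<and> j < 4 then 1 / g x j j else 0"] by auto
  fix h :: "nat \<Rightarrow> nat \<Rightarrow> real"
  assume h: "(\<forall>j k. 4 \<le> j \<or> 4 \<le> k \<longrightarrow> h j k = 0) \<and>
    (\<forall>i<4. \<forall>k<4. (\<Sum>j<4. g x i j * h j k) = (if i = k then 1 else 0))"
  show "h = (\<lambda>i j. if i = j \<and> i < 4 then 1 / g x i i else 0)"
  proof (intro ext)
    fix i k
    show "h i k = (if i = k \<and> i < 4 then 1 / g x i i else 0)"
    proof (cases "i < 4 \<and> k < 4")
      case True
      then have "g x i i * h i k = (if i = k then 1 else 0)" using h row by metis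
      then show ?thesis using True nz by (auto simp: field_simps)
    next
      case False
      then show ?thesis using h by auto
    qed
  qed
qed

lemma christoffel_diagonal:
  assumes "diagonal_at g x" and "k < 4"
  shows "christoffel g x k i j =
    (pd (\<lambda>y. g y j k) i x + pd (\<lambda>y. g y i k) j x - pd (\<lambda>y. g y i j) k x) / (2 * g x k k)"
proof -
  have "christoffel g x k i j = (1/2) * (\<Sum>l<4. if k = l then
      (pd (\<lambda>y. g y j l) i x + pd (\<lambda>y. g y i l) j x - pd (\<lambda>y. g y i j) l x) / g x k k else 0)"
    unfolding christoffel_def ginv_diagonal[OF assms(1)] by (intro arg_cong[where f = "(*) _"] sum.cong) auto
  then show ?thesis using assms(2) by simp
qed

lemma scalar_curv_diagonal:
  assumes "diagonal_at g x" and "\<forall>i<4. \<forall>j<4. ricci g x i j = g x i j * \<mu> i"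
  shows "scalar_curv g x = (\<Sum>i<4. \<mu> i)"
proof -
  have "scalar_curv g x = (\<Sum>i<4. \<Sum>j<4. if i = j then \<mu> i else 0)"
    using assms unfolding scalar_curv_def ginv_diagonal[OF assms(1)] diagonal_at_def
    by (intro sum.cong) auto
  then show ?thesis by simp
qed

lemma pd_local_function_of_r_theta:
  assumes "open I" "open J" "x 1 \<in> I" "x 2 \<in> J"
    and G: "\<And>y. y 1 \<in> I \<Longrightarrow> y 2 \<in> J \<Longrightarrow> G y = F (y 1) (y 2)"
    and Fr: "((\<lambda>r. F r (x 2)) has_real_derivative Fr) (at (x 1))"
    and Ft: "((\<lambda>t. F (x 1) t) has_real_derivative Ft) (at (x 2))"
  shows "pd G m x = (if m = 1 then Fr else if m = 2 then Ft else 0)"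
proof -
  consider "m = 1" | "m = 2" | "m \<noteq> 1" "m \<noteq> 2" by blast
  then show ?thesis
  proof cases
    case 1
    have "eventually (\<lambda>s. s \<in> I) (nhds (x 1))"
      using assms(1,3) by (rule eventually_nhds_in_open)
    then have "eventually (\<lambda>s. G (x(1 := s)) = F s (x 2)) (nhds (x 1))"
      by eventually_elim (use assms(4) G in simp)
    then have "pd G 1 x = deriv (\<lambda>s. F s (x 2)) (x 1)"
      unfolding pd_def by (rule deriv_cong_ev) simp
    then show ?thesis using 1 Fr by (simp add: DERIV_imp_deriv)
  next
    case 2
    have "eventually (\<lambda>s. s \<in> J) (nhds (x 2))"
      using assms(2,4) by (rule eventually_nhds_in_open)
    then have "eventually (\<lambda>s. G (x(2 := s)) = F (x 1) s) (nhds (x 2))"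
      by eventually_elim (use assms(3) G in simp)
    then have "pd G 2 x = deriv (\<lambda>s. F (x 1) s) (x 2)"
      unfolding pd_def by (rule deriv_cong_ev) simp
    then show ?thesis using 2 Ft by (simp add: DERIV_imp_deriv)
  next
    case 3
    then have "(\<lambda>s. G (x(m := s))) = (\<lambda>s. F (x 1) (x 2))"
      using assms(3,4) G by auto
    then show ?thesis using 3 by (simp add: pd_def)
  qed
qed

lemma has_real_derivative_zero_if_constant_on_open:
  assumes "open I" "r \<in> I" "\<forall>s\<in>I. F s = C" "(F has_real_derivative F') (at r)"
  shows "F' = 0"
proof -
  have "(F has_real_derivative 0) (at r)"
    using assms(1-3) by (intro has_field_derivative_transform_within_open[OF DERIV_const]) auto
  with assms(4) show ?thesis by (rule DERIV_unique)
qed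

lemma has_real_derivative_if:
  "(P \<Longrightarrow> (g has_real_derivative g') F) \<Longrightarrow> (\<not> P \<Longrightarrow> (h has_real_derivative h') F) \<Longrightarrow>
    ((\<lambda>s. if P then g s else h s) has_real_derivative (if P then g' else h')) F"
  by (cases P) auto

lemma open_sin_nonzero: "open {t. sin t \<noteq> (0::real)}"
  by (intro open_Collect_neq continuous_intros)

definition static_metric :: "(real \<Rightarrow> real) \<Rightarrow> metric" where
  "static_metric f x i j = (if i \<noteq> j then 0
     else if i = 0 then - f (x 1)
     else if i = 1 then 1 / f (x 1)
     else if i = 2 then (x 1)\<^sup>2
     else if i = 3 then (x 1)\<^sup>2 * (sin (x 2))\<^sup>2
     else 0)"

lemma sss_metric_eq_static_metric: "sss_metric b = static_metric (\<lambda>r. (b r)\<^sup>2)"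
  by (simp add: fun_eq_iff sss_metric_def static_metric_def)

lemma K_tensor_eq_sss_metric_mult:
  assumes "b (x 1) \<noteq> 0"
  shows "K_tensor \<kappa>1 \<kappa>2 b x k l =
    sss_metric b x k l * (if k < 2 then \<kappa>1 + \<kappa>2 * (x 1)\<^sup>2 else \<kappa>1 + 2 * \<kappa>2 * (x 1)\<^sup>2)"
  using assms by (auto simp: K_tensor_def u_cov_def chi_cov_def sss_metric_def field_simps power2_eq_square)

(* Christoffel symbols of static_metric f at r = x 1, theta = x 2, and their partial derivatives
   in r and theta.  The three tables share one case structure, so that has_real_derivative_if
   differentiates them branch by branch. *)
definition static_christoffel :: "(real \<Rightarrow> real) \<Rightarrow> real \<Rightarrow> real \<Rightarrow> nat \<Rightarrow> nat \<Rightarrow> nat \<Rightarrow> real" where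
  "static_christoffel f r t k i j =
    (if k = 0 \<and> (i = 0 \<and> j = 1 \<or> i = 1 \<and> j = 0) then deriv f r / (2 * f r)
     else if k = 1 \<and> i = 0 \<and> j = 0 then f r * deriv f r / 2
     else if k = 1 \<and> i = 1 \<and> j = 1 then - (deriv f r / (2 * f r))
     else if k = 1 \<and> i = 2 \<and> j = 2 then - (r * f r)
     else if k = 1 \<and> i = 3 \<and> j = 3 then - (r * f r * (sin t)\<^sup>2)
     else if k = 2 \<and> (i = 1 \<and> j = 2 \<or> i = 2 \<and> j = 1) then 1 / r
     else if k = 2 \<and> i = 3 \<and> j = 3 then - (sin t * cos t)
     else if k = 3 \<and> (i = 1 \<and> j = 3 \<or> i = 3 \<and> j = 1) then 1 / r
     else if k = 3 \<and> (i = 2 \<and> j = 3 \<or> i = 3 \<and> j = 2) then cos t / sin t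
     else 0)"

definition static_christoffel_dr :: "(real \<Rightarrow> real) \<Rightarrow> real \<Rightarrow> real \<Rightarrow> nat \<Rightarrow> nat \<Rightarrow> nat \<Rightarrow> real" where
  "static_christoffel_dr f r t k i j =
    (if k = 0 \<and> (i = 0 \<and> j = 1 \<or> i = 1 \<and> j = 0)
       then (f r * deriv (deriv f) r - (deriv f r)\<^sup>2) / (2 * (f r)\<^sup>2)
     else if k = 1 \<and> i = 0 \<and> j = 0 then ((deriv f r)\<^sup>2 + f r * deriv (deriv f) r) / 2
     else if k = 1 \<and> i = 1 \<and> j = 1
       then - ((f r * deriv (deriv f) r - (deriv f r)\<^sup>2) / (2 * (f r)\<^sup>2))
     else if k = 1 \<and> i = 2 \<and> j = 2 then - (f r + r * deriv f r)
     else if k = 1 \<and> i = 3 \<and> j = 3 then - ((f r + r * deriv f r) * (sin t)\<^sup>2)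
     else if k = 2 \<and> (i = 1 \<and> j = 2 \<or> i = 2 \<and> j = 1) then - 1 / r\<^sup>2
     else if k = 2 \<and> i = 3 \<and> j = 3 then 0
     else if k = 3 \<and> (i = 1 \<and> j = 3 \<or> i = 3 \<and> j = 1) then - 1 / r\<^sup>2
     else if k = 3 \<and> (i = 2 \<and> j = 3 \<or> i = 3 \<and> j = 2) then 0
     else 0)"

definition static_christoffel_dt :: "(real \<Rightarrow> real) \<Rightarrow> real \<Rightarrow> real \<Rightarrow> nat \<Rightarrow> nat \<Rightarrow> nat \<Rightarrow> real" where
  "static_christoffel_dt f r t k i j =
    (if k = 0 \<and> (i = 0 \<and> j = 1 \<or> i = 1 \<and> j = 0) then 0
     else if k = 1 \<and> i = 0 \<and> j = 0 then 0
     else if k = 1 \<and> i = 1 \<and> j = 1 then 0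
     else if k = 1 \<and> i = 2 \<and> j = 2 then 0
     else if k = 1 \<and> i = 3 \<and> j = 3 then - (r * f r * (2 * sin t * cos t))
     else if k = 2 \<and> (i = 1 \<and> j = 2 \<or> i = 2 \<and> j = 1) then 0
     else if k = 2 \<and> i = 3 \<and> j = 3 then - ((cos t)\<^sup>2 - (sin t)\<^sup>2)
     else if k = 3 \<and> (i = 1 \<and> j = 3 \<or> i = 3 \<and> j = 1) then 0
     else if k = 3 \<and> (i = 2 \<and> j = 3 \<or> i = 3 \<and> j = 2) then - 1 / (sin t)\<^sup>2
     else 0)"

(* The mixed components G^t_t = G^r_r and G^theta_theta = G^phi_phi of the Einstein tensor of
   static_metric f. *)
definition einstein_tr :: "(real \<Rightarrow> real) \<Rightarrow> real \<Rightarrow> real" where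
  "einstein_tr f r = (r * deriv f r + f r - 1) / r\<^sup>2"

definition einstein_ang :: "(real \<Rightarrow> real) \<Rightarrow> real \<Rightarrow> real" where
  "einstein_ang f r = (r * deriv (deriv f) r + 2 * deriv f r) / (2 * r)"

locale static_lapse =
  fixes f :: "real \<Rightarrow> real" and I :: "real set"
  assumes open_I: "open I" and I_pos: "I \<subseteq> {0<..}"
    and f_nonzero: "\<forall>r\<in>I. f r \<noteq> 0"
    and f_differentiable: "\<forall>r\<in>I. f differentiable (at r)"
    and deriv_f_differentiable: "\<forall>r\<in>I. deriv f differentiable (at r)"
begin

definition in_chart :: "point \<Rightarrow> bool" where
  "in_chart x \<longleftrightarrow> x 1 \<in> I \<and> sin (x 2) \<noteq> 0"

lemma in_chart_nonzero:
  assumes "in_chart x" shows "x 1 > 0" "f (x 1) \<noteq> 0" "sin (x 2) \<noteq> 0"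
  using assms I_pos f_nonzero unfolding in_chart_def by auto

lemma has_deriv_f: "r \<in> I \<Longrightarrow> (f has_real_derivative deriv f r) (at r)"
  using f_differentiable by (simp add: DERIV_deriv_iff_real_differentiable)

lemma has_deriv_deriv_f: "r \<in> I \<Longrightarrow> (deriv f has_real_derivative deriv (deriv f) r) (at r)"
  using deriv_f_differentiable by (simp add: DERIV_deriv_iff_real_differentiable)

lemma static_metric_diagonal:
  assumes "in_chart x" shows "diagonal_at (static_metric f) x"
  using in_chart_nonzero[OF assms] by (auto simp: diagonal_at_def static_metric_def)

lemma pd_static_metric:
  assumes "in_chart x"
  shows "pd (\<lambda>y. static_metric f y i j) m x =
    (if m = 1 then
       (if i \<noteq> j then 0
        else if i = 0 then - deriv f (x 1)
        else if i = 1 then - deriv f (x 1) / (f (x 1))\<^sup>2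
        else if i = 2 then 2 * x 1
        else if i = 3 then 2 * x 1 * (sin (x 2))\<^sup>2
        else 0)
     else if m = 2 then
       (if i \<noteq> j then 0
        else if i = 0 then 0
        else if i = 1 then 0
        else if i = 2 then 0
        else if i = 3 then (x 1)\<^sup>2 * (2 * sin (x 2) * cos (x 2))
        else 0)
     else 0)"
proof -
  have x1: "x 1 \<in> I" using assms unfolding in_chart_def by simp
  define F where "F = (\<lambda>r t. if i \<noteq> j then 0
      else if i = 0 then - f r
      else if i = 1 then 1 / f r
      else if i = 2 then r\<^sup>2
      else if i = 3 then r\<^sup>2 * (sin t)\<^sup>2
      else 0)"
  have inv: "((\<lambda>r. 1 / f r) has_real_derivative - deriv f (x 1) / (f (x 1))\<^sup>2) (at (x 1))"
    using has_deriv_f[OF x1] in_chart_nonzero[OF assms]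
    by (auto intro!: derivative_eq_intros simp: power2_eq_square)
  have sq: "((\<lambda>r. r\<^sup>2) has_real_derivative 2 * x 1) (at (x 1))"
    by (auto intro!: derivative_eq_intros)
  have sin_sq: "((\<lambda>t. (sin t)\<^sup>2) has_real_derivative 2 * sin (x 2) * cos (x 2)) (at (x 2))"
    by (auto intro!: derivative_eq_intros)
  show ?thesis
  proof (rule pd_local_function_of_r_theta[where x = x and F = F, OF open_I open_UNIV x1 UNIV_I])
    show "static_metric f y i j = F (y 1) (y 2)" for y
      by (simp add: F_def static_metric_def)
  qed (unfold F_def, (intro has_real_derivative_if DERIV_minus DERIV_cmult_right DERIV_cmult DERIV_const
      has_deriv_f[OF x1] inv sq sin_sq)+)
qed

lemma christoffel_static:
  assumes "in_chart x" "k < 4" "i < 4" "j < 4"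
  shows "christoffel (static_metric f) x k i j = static_christoffel f (x 1) (x 2) k i j"
  using assms(2-4) in_chart_nonzero[OF assms(1)]
  unfolding christoffel_diagonal[OF static_metric_diagonal[OF assms(1)] assms(2)]
    pd_static_metric[OF assms(1)] nat_less_4_iff
  by (elim disjE) (simp_all add: static_metric_def static_christoffel_def field_simps power2_eq_square)

lemma static_christoffel_has_deriv_r:
  assumes "r \<in> I"
  shows "((\<lambda>s. static_christoffel f s t k i j) has_real_derivative static_christoffel_dr f r t k i j) (at r)"
proof -
  have nz: "r \<noteq> 0" "f r \<noteq> 0" using assms I_pos f_nonzero by auto
  note d = has_deriv_f[OF assms] has_deriv_deriv_f[OF assms]
  have "((\<lambda>s. deriv f s / (2 * f s)) has_real_derivative
      (f r * deriv (deriv f) r - (deriv f r)\<^sup>2) / (2 * (f r)\<^sup>2)) (at r)"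
    using nz d by (auto intro!: derivative_eq_intros simp: field_simps power2_eq_square)
  moreover have "((\<lambda>s. f s * deriv f s / 2) has_real_derivative
      ((deriv f r)\<^sup>2 + f r * deriv (deriv f) r) / 2) (at r)"
    using d by (auto intro!: derivative_eq_intros simp: field_simps power2_eq_square)
  moreover have "((\<lambda>s. s * f s) has_real_derivative f r + r * deriv f r) (at r)"
    using d by (auto intro!: derivative_eq_intros)
  moreover have "((\<lambda>s. 1 / s) has_real_derivative - 1 / r\<^sup>2) (at r)"
    using nz by (auto intro!: derivative_eq_intros simp: power2_eq_square)
  ultimately show ?thesis
    unfolding static_christoffel_def static_christoffel_dr_def
    by (intro has_real_derivative_if DERIV_minus DERIV_cmult_right DERIV_const)
qed

lemma static_christoffel_has_deriv_t:
  assumes "sin t \<noteq> 0"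
  shows "((\<lambda>s. static_christoffel f r s k i j) has_real_derivative static_christoffel_dt f r t k i j) (at t)"
proof -
  have "((\<lambda>s. r * f r * (sin s)\<^sup>2) has_real_derivative r * f r * (2 * sin t * cos t)) (at t)"
    by (auto intro!: derivative_eq_intros)
  moreover have "((\<lambda>s. sin s * cos s) has_real_derivative (cos t)\<^sup>2 - (sin t)\<^sup>2) (at t)"
    by (auto intro!: derivative_eq_intros simp: power2_eq_square)
  moreover have "((\<lambda>s. cos s / sin s) has_real_derivative - 1 / (sin t)\<^sup>2) (at t)"
  proof -
    have "((\<lambda>s. cos s / sin s) has_real_derivative
        (- sin t * sin t - cos t * cos t) / (sin t * sin t)) (at t)"
      using assms by (auto intro!: derivative_eq_intros)
    moreover have "- sin t * sin t - cos t * cos t = - 1"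
      using sin_cos_squared_add3[of t] by linarith
    ultimately show ?thesis by (simp add: power2_eq_square)
  qed
  ultimately show ?thesis
    unfolding static_christoffel_def static_christoffel_dt_def
    by (intro has_real_derivative_if DERIV_minus DERIV_const)
qed

lemma pd_christoffel_static:
  assumes "in_chart x" "k < 4" "i < 4" "j < 4"
  shows "pd (\<lambda>y. christoffel (static_metric f) y k i j) m x =
    (if m = 1 then static_christoffel_dr f (x 1) (x 2) k i j
     else if m = 2 then static_christoffel_dt f (x 1) (x 2) k i j else 0)"
proof (rule pd_local_function_of_r_theta[of I "{t. sin t \<noteq> 0}"])
  show "open I" "open {t. sin t \<noteq> (0::real)}" using open_I open_sin_nonzero .
  show "x 1 \<in> I" "x 2 \<in> {t. sin t \<noteq> 0}" using assms(1) unfolding in_chart_def by auto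
  show "christoffel (static_metric f) y k i j = static_christoffel f (y 1) (y 2) k i j"
    if "y 1 \<in> I" "y 2 \<in> {t. sin t \<noteq> 0}" for y
    using that assms(2-4) by (intro christoffel_static) (auto simp: in_chart_def)
  show "((\<lambda>r. static_christoffel f r (x 2) k i j) has_real_derivative
      static_christoffel_dr f (x 1) (x 2) k i j) (at (x 1))"
    using assms(1) unfolding in_chart_def by (intro static_christoffel_has_deriv_r) auto
  show "((\<lambda>t. static_christoffel f (x 1) t k i j) has_real_derivative
      static_christoffel_dt f (x 1) (x 2) k i j) (at (x 2))"
    using assms(1) unfolding in_chart_def by (intro static_christoffel_has_deriv_t) auto
qed

lemma ricci_static:
  assumes "in_chart x" "i < 4" "j < 4"
  shows "ricci (static_metric f) x i j = static_metric f x i j *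
    (if i < 2 then - (x 1 * deriv (deriv f) (x 1) + 2 * deriv f (x 1)) / (2 * x 1)
     else (1 - f (x 1) - x 1 * deriv f (x 1)) / (x 1)\<^sup>2)"
  using assms(2,3) in_chart_nonzero[OF assms(1)]
  unfolding ricci_def sum_lessThan_4 nat_less_4_iff
  by (elim disjE; simp add: pd_christoffel_static[OF assms(1)] christoffel_static[OF assms(1)];
      simp add: static_christoffel_def static_christoffel_dr_def static_christoffel_dt_def static_metric_def;
      simp add: field_simps power2_eq_square)

lemma einstein_static:
  assumes "in_chart x" "k < 4" "l < 4"
  shows "ricci (static_metric f) x k l - 1/2 * scalar_curv (static_metric f) x * static_metric f x k l =
    static_metric f x k l * (if k < 2 then einstein_tr f (x 1) else einstein_ang f (x 1))"
proof -
  define \<mu> where "\<mu> i = (if i < 2 then - (x 1 * deriv (deriv f) (x 1) + 2 * deriv f (x 1)) / (2 * x 1)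
     else (1 - f (x 1) - x 1 * deriv f (x 1)) / (x 1)\<^sup>2)" for i :: nat
  have "scalar_curv (static_metric f) x = (\<Sum>i<4. \<mu> i)"
    using static_metric_diagonal[OF assms(1)] ricci_static[OF assms(1)]
    by (intro scalar_curv_diagonal) (auto simp: \<mu>_def)
  moreover have "\<mu> 1 = \<mu> 0" "\<mu> 3 = \<mu> 2" by (simp_all add: \<mu>_def)
  ultimately have scal: "scalar_curv (static_metric f) x = 2 * \<mu> 0 + 2 * \<mu> 2"
    by (simp add: sum_lessThan_4)
  show ?thesis
    unfolding ricci_static[OF assms] scal using in_chart_nonzero[OF assms(1)]
    by (cases "k < 2") (auto simp: \<mu>_def einstein_tr_def einstein_ang_def field_simps power2_eq_square)
qed

lemma mass_function_has_deriv:
  assumes "r \<in> I"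
  shows "((\<lambda>s. s * f s - s - \<kappa>1 * s ^ 3 / 3 - \<kappa>2 * s ^ 5 / 5) has_real_derivative
    r\<^sup>2 * (einstein_tr f r - (\<kappa>1 + \<kappa>2 * r\<^sup>2))) (at r)"
  using has_deriv_f[OF assms] assms I_pos
  by (auto intro!: derivative_eq_intros simp: einstein_tr_def field_simps power2_eq_square eval_nat_numeral)

lemma einstein_bianchi:
  assumes "r \<in> I"
  shows "((\<lambda>s. s\<^sup>2 * (einstein_tr f s - (\<kappa>1 + \<kappa>2 * s\<^sup>2))) has_real_derivative
    2 * r * (einstein_ang f r - (\<kappa>1 + 2 * \<kappa>2 * r\<^sup>2))) (at r)"
  using has_deriv_f[OF assms] has_deriv_deriv_f[OF assms] assms I_pos
  by (auto intro!: derivative_eq_intros simp: einstein_tr_def einstein_ang_def field_simps power2_eq_square eval_nat_numeral)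

lemma einstein_tr_iff_mass:
  assumes "is_interval I"
  shows "(\<forall>r\<in>I. einstein_tr f r = \<kappa>1 + \<kappa>2 * r\<^sup>2) \<longleftrightarrow>
    (\<exists>M. \<forall>r\<in>I. f r = 1 - 2 * M / r + \<kappa>1 / 3 * r\<^sup>2 + \<kappa>2 / 5 * r ^ 4)"
proof -
  define F where "F = (\<lambda>s. s * f s - s - \<kappa>1 * s ^ 3 / 3 - \<kappa>2 * s ^ 5 / 5)"
  have dF: "(F has_real_derivative r\<^sup>2 * (einstein_tr f r - (\<kappa>1 + \<kappa>2 * r\<^sup>2))) (at r)"
    if "r \<in> I" for r
    unfolding F_def using that by (rule mass_function_has_deriv)
  have "(\<forall>r\<in>I. einstein_tr f r = \<kappa>1 + \<kappa>2 * r\<^sup>2) \<longleftrightarrow> (\<exists>C. \<forall>r\<in>I. F r = C)"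
  proof
    assume tr: "\<forall>r\<in>I. einstein_tr f r = \<kappa>1 + \<kappa>2 * r\<^sup>2"
    have "(F has_real_derivative 0) (at r within I)" if "r \<in> I" for r
      using dF[OF that] tr that by (simp add: has_field_derivative_at_within)
    then show "\<exists>C. \<forall>r\<in>I. F r = C"
      by (rule has_field_derivative_zero_constant[OF is_interval_convex[OF assms]])
  next
    assume "\<exists>C. \<forall>r\<in>I. F r = C"
    then obtain C where C: "\<forall>r\<in>I. F r = C" ..
    show "\<forall>r\<in>I. einstein_tr f r = \<kappa>1 + \<kappa>2 * r\<^sup>2"
    proof
      fix r assume r: "r \<in> I"
      have "r\<^sup>2 * (einstein_tr f r - (\<kappa>1 + \<kappa>2 * r\<^sup>2)) = 0"
        using open_I r C dF[OF r] by (rule has_real_derivative_zero_if_constant_on_open)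
      then show "einstein_tr f r = \<kappa>1 + \<kappa>2 * r\<^sup>2"
        using r I_pos by auto
    qed
  qed
  also have "\<dots> \<longleftrightarrow> (\<exists>M. \<forall>r\<in>I. F r = - 2 * M)"
  proof
    assume "\<exists>C. \<forall>r\<in>I. F r = C"
    then obtain C where "\<forall>r\<in>I. F r = C" ..
    then have "\<forall>r\<in>I. F r = - 2 * (- C / 2)" by simp
    then show "\<exists>M. \<forall>r\<in>I. F r = - 2 * M" ..
  qed blast
  also have "\<dots> \<longleftrightarrow> (\<exists>M. \<forall>r\<in>I. f r = 1 - 2 * M / r + \<kappa>1 / 3 * r\<^sup>2 + \<kappa>2 / 5 * r ^ 4)"
  proof -
    have "F r = - 2 * M \<longleftrightarrow> f r = 1 - 2 * M / r + \<kappa>1 / 3 * r\<^sup>2 + \<kappa>2 / 5 * r ^ 4"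
      if "r \<in> I" for r M
    proof -
      have "r > 0" using that I_pos by auto
      then show ?thesis unfolding F_def by (simp add: field_simps eval_nat_numeral)
    qed
    then show ?thesis by simp
  qed
  finally show ?thesis .
qed

lemma einstein_ang_of_einstein_tr:
  assumes "\<forall>r\<in>I. einstein_tr f r = \<kappa>1 + \<kappa>2 * r\<^sup>2"
  shows "\<forall>r\<in>I. einstein_ang f r = \<kappa>1 + 2 * \<kappa>2 * r\<^sup>2"
proof
  fix r assume r: "r \<in> I"
  have "2 * r * (einstein_ang f r - (\<kappa>1 + 2 * \<kappa>2 * r\<^sup>2)) = 0"
    using assms by (intro has_real_derivative_zero_if_constant_on_open[OF open_I r _ einstein_bianchi[OF r]]) auto
  then show "einstein_ang f r = \<kappa>1 + 2 * \<kappa>2 * r\<^sup>2"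
    using r I_pos by auto
qed

lemma sss_field_equations_residual:
  assumes f_eq: "f = (\<lambda>r. (b r)\<^sup>2)" and "in_chart x" "k < 4" "l < 4"
  shows "ricci (sss_metric b) x k l - (1/2) * scalar_curv (sss_metric b) x * sss_metric b x k l
      - K_tensor \<kappa>1 \<kappa>2 b x k l = static_metric f x k l *
      (if k < 2 then einstein_tr f (x 1) - (\<kappa>1 + \<kappa>2 * (x 1)\<^sup>2)
       else einstein_ang f (x 1) - (\<kappa>1 + 2 * \<kappa>2 * (x 1)\<^sup>2))"
proof -
  have "b (x 1) \<noteq> 0" using in_chart_nonzero(2)[OF assms(2)] f_eq by simp
  then show ?thesis
    using einstein_static[OF assms(2-4)] K_tensor_eq_sss_metric_mult[of b x \<kappa>1 \<kappa>2 k l]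
    unfolding sss_metric_eq_static_metric f_eq[symmetric] by (simp add: algebra_simps)
qed

lemma field_equations_iff:
  assumes f_eq: "f = (\<lambda>r. (b r)\<^sup>2)"
  shows "(\<forall>x. x 1 \<in> I \<and> 0 < x 2 \<and> x 2 < pi \<longrightarrow>
      (\<forall>k<4. \<forall>l<4. ricci (sss_metric b) x k l
         - (1/2) * scalar_curv (sss_metric b) x * sss_metric b x k l = K_tensor \<kappa>1 \<kappa>2 b x k l))
    \<longleftrightarrow> (\<forall>r\<in>I. einstein_tr f r = \<kappa>1 + \<kappa>2 * r\<^sup>2 \<and> einstein_ang f r = \<kappa>1 + 2 * \<kappa>2 * r\<^sup>2)"
proof
  assume H: "\<forall>x. x 1 \<in> I \<and> 0 < x 2 \<and> x 2 < pi \<longrightarrow>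
    (\<forall>k<4. \<forall>l<4. ricci (sss_metric b) x k l
       - (1/2) * scalar_curv (sss_metric b) x * sss_metric b x k l = K_tensor \<kappa>1 \<kappa>2 b x k l)"
  show "\<forall>r\<in>I. einstein_tr f r = \<kappa>1 + \<kappa>2 * r\<^sup>2 \<and> einstein_ang f r = \<kappa>1 + 2 * \<kappa>2 * r\<^sup>2"
  proof
    fix r assume r: "r \<in> I"
    define x :: point where "x n = (if n = 1 then r else pi / 2)" for n
    have x: "x 1 = r" "in_chart x" using r by (simp_all add: x_def in_chart_def)
    have "x 1 \<in> I \<and> 0 < x 2 \<and> x 2 < pi" using r pi_gt_zero by (simp add: x_def)
    then have "ricci (sss_metric b) x k k - (1/2) * scalar_curv (sss_metric b) x * sss_metric b x k k
        = K_tensor \<kappa>1 \<kappa>2 b x k k" if "k < 4" for k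
      using H that by blast
    then have "static_metric f x k k * (if k < 2 then einstein_tr f r - (\<kappa>1 + \<kappa>2 * r\<^sup>2)
        else einstein_ang f r - (\<kappa>1 + 2 * \<kappa>2 * r\<^sup>2)) = 0" if "k < 4" for k
      using sss_field_equations_residual[OF f_eq x(2) that that, of \<kappa>1 \<kappa>2] that unfolding x(1) by simp
    from this[of 0] this[of 2] show "einstein_tr f r = \<kappa>1 + \<kappa>2 * r\<^sup>2 \<and> einstein_ang f r = \<kappa>1 + 2 * \<kappa>2 * r\<^sup>2"
      using in_chart_nonzero[OF x(2)] x(1) by (simp add: static_metric_def)
  qed
next
  assume H: "\<forall>r\<in>I. einstein_tr f r = \<kappa>1 + \<kappa>2 * r\<^sup>2 \<and> einstein_ang f r = \<kappa>1 + 2 * \<kappa>2 * r\<^sup>2"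
  show "\<forall>x. x 1 \<in> I \<and> 0 < x 2 \<and> x 2 < pi \<longrightarrow>
    (\<forall>k<4. \<forall>l<4. ricci (sss_metric b) x k l
       - (1/2) * scalar_curv (sss_metric b) x * sss_metric b x k l = K_tensor \<kappa>1 \<kappa>2 b x k l)"
  proof (intro allI impI)
    fix x :: point and k l :: nat
    assume x: "x 1 \<in> I \<and> 0 < x 2 \<and> x 2 < pi" and kl: "k < 4" "l < 4"
    then have "in_chart x"
      using sin_gt_zero[of "x 2"] by (auto simp: in_chart_def)
    moreover have "einstein_tr f (x 1) = \<kappa>1 + \<kappa>2 * (x 1)\<^sup>2"
      "einstein_ang f (x 1) = \<kappa>1 + 2 * \<kappa>2 * (x 1)\<^sup>2"
      using H x by blast+
    ultimately show "ricci (sss_metric b) x k l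
       - (1/2) * scalar_curv (sss_metric b) x * sss_metric b x k l = K_tensor \<kappa>1 \<kappa>2 b x k l"
      using sss_field_equations_residual[OF f_eq _ kl, of x \<kappa>1 \<kappa>2] by (cases "k < 2") simp_all
  qed
qed

end

lemma static_lapse_square:
  assumes "open I" "I \<subseteq> {0<..}" "smooth_on I b" "\<forall>r\<in>I. b r > 0"
  shows "static_lapse (\<lambda>r. (b r)\<^sup>2) I"
proof
  show "open I" "I \<subseteq> {0<..}" using assms(1,2) .
  show "\<forall>r\<in>I. (b r)\<^sup>2 \<noteq> 0" using assms(4) by force
  have smooth: "((deriv ^^ n) b) differentiable (at r)" if "r \<in> I" for n r
    using assms(3) that unfolding smooth_on_def by blast
  have db: "(b has_real_derivative deriv b r) (at r)"
    and ddb: "(deriv b has_real_derivative deriv (deriv b) r) (at r)" if "r \<in> I" for r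
    using smooth[OF that, of 0] smooth[OF that, of "Suc 0"]
    by (simp_all add: DERIV_deriv_iff_real_differentiable)
  have sq: "((\<lambda>r. (b r)\<^sup>2) has_real_derivative 2 * b r * deriv b r) (at r)" if "r \<in> I" for r
    using db[OF that] by (auto intro!: derivative_eq_intros)
  then show "\<forall>r\<in>I. (\<lambda>r. (b r)\<^sup>2) differentiable (at r)"
    unfolding real_differentiable_def by blast
  show "\<forall>r\<in>I. deriv (\<lambda>r. (b r)\<^sup>2) differentiable (at r)"
  proof
    fix r assume r: "r \<in> I"
    have "((\<lambda>s. 2 * b s * deriv b s) has_real_derivative
        2 * deriv b r * deriv b r + 2 * b r * deriv (deriv b) r) (at r)"
      using db[OF r] ddb[OF r] by (auto intro!: derivative_eq_intros)
    then have "(deriv (\<lambda>r. (b r)\<^sup>2) has_real_derivative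
        2 * deriv b r * deriv b r + 2 * b r * deriv (deriv b) r) (at r)"
      using assms(1) r
    proof (rule has_field_derivative_transform_within_open)
      show "2 * b s * deriv b s = deriv (\<lambda>r. (b r)\<^sup>2) s" if "s \<in> I" for s
        using sq[OF that] by (simp add: DERIV_imp_deriv)
    qed
    then show "deriv (\<lambda>r. (b r)\<^sup>2) differentiable (at r)"
      unfolding real_differentiable_def by blast
  qed
qed

theorem proposition9:
  fixes b :: "real \<Rightarrow> real" and I :: "real set" and \<kappa>1 \<kappa>2 Lam lam :: real
  assumes "open I" and "is_interval I" and "I \<noteq> {}" and "I \<subseteq> {0<..}"
    and "smooth_on I b" and "\<forall>r\<in>I. b r > 0"
    and "Lam = - \<kappa>1" and "lam = - \<kappa>2"
  shows "(\<forall>x. x 1 \<in> I \<and> 0 < x 2 \<and> x 2 < pi \<longrightarrow>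
            (\<forall>k<4. \<forall>l<4. ricci (sss_metric b) x k l
                 - (1/2) * scalar_curv (sss_metric b) x * sss_metric b x k l
               = K_tensor \<kappa>1 \<kappa>2 b x k l))
     \<longleftrightarrow> (\<exists>M. \<forall>r\<in>I. (b r)\<^sup>2 = 1 - 2 * M / r - Lam / 3 * r\<^sup>2 - lam / 5 * r ^ 4)"
proof -
  define f where "f = (\<lambda>r. (b r)\<^sup>2)"
  interpret static_lapse f I
    unfolding f_def using assms(1,4-6) by (rule static_lapse_square)
  have "(\<forall>x. x 1 \<in> I \<and> 0 < x 2 \<and> x 2 < pi \<longrightarrow>
            (\<forall>k<4. \<forall>l<4. ricci (sss_metric b) x k l
                 - (1/2) * scalar_curv (sss_metric b) x * sss_metric b x k l
               = K_tensor \<kappa>1 \<kappa>2 b x k l))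
     \<longleftrightarrow> (\<forall>r\<in>I. einstein_tr f r = \<kappa>1 + \<kappa>2 * r\<^sup>2 \<and> einstein_ang f r = \<kappa>1 + 2 * \<kappa>2 * r\<^sup>2)"
    using f_def by (rule field_equations_iff)
  also have "\<dots> \<longleftrightarrow> (\<forall>r\<in>I. einstein_tr f r = \<kappa>1 + \<kappa>2 * r\<^sup>2)"
    using einstein_ang_of_einstein_tr by blast
  also have "\<dots> \<longleftrightarrow> (\<exists>M. \<forall>r\<in>I. f r = 1 - 2 * M / r + \<kappa>1 / 3 * r\<^sup>2 + \<kappa>2 / 5 * r ^ 4)"
    using assms(2) by (rule einstein_tr_iff_mass)
  finally show ?thesis
    by (simp add: f_def assms(7,8))
qed

end
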